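(* Let $Q$ be a finite poset, $X_Q$ its cube complex, and let $C(I_i,M_i)$ and $C(I_{i+1},M_{i+1})$ be consecutive cubes $P_i, P_{i+1}$ of a valid cube sequence in $X_Q$. Then every maximal cube of the interval $X[P_i,P_{i+1}]$ contains the vertex corresponding to the order ideal $I_i$.
   Context: For a finite poset $Q$, $X_Q$ is the cube complex whose vertices are the order ideals of $Q$ and with a cube $C(I,M)$ for each order ideal $I$ and subset $M$ of the set of maximal elements of $I$, whose vertices are $I\setminus S$, $S\subseteq M$. A valid cube sequence is a sequence of cubes $C(I_1,M_1),\dots,C(I_k,M_k)$ of $X_Q$ such that (a) $I_1\subset\cdots\subset I_k=Q$; (b) $I_1=M_1$ and $I_j\setminus I_{j-1}\subseteq M_j$ for $1<j\le k$; (c) each $M_j$ is a maximal antichain of $Q$. For cubes $C,D$, the interval $X[C,D]$ is the subcomplex consisting of all cubes all of whose vertices lie on at least one edge geodesic (shortest path along edges) between a vertex of $C$ and a vertex of $D$. *)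

theory Defs
  imports Main
begin

text \<open>A finite poset is a finite carrier Q with a partial order r on Q
  (partial_order_on Q r); x is below y iff (x,y) in r.\<close>

definition order_ideal :: "'a set \<Rightarrow> 'a rel \<Rightarrow> 'a set \<Rightarrow> bool" where
  "order_ideal Q r I \<longleftrightarrow> I \<subseteq> Q \<and> (\<forall>x\<in>I. \<forall>y. (y, x) \<in> r \<longrightarrow> y \<in> I)"

definition maximal_elems :: "'a rel \<Rightarrow> 'a set \<Rightarrow> 'a set" where
  "maximal_elems r I = {x \<in> I. \<forall>y\<in>I. (x, y) \<in> r \<longrightarrow> y = x}"

definition antichain :: "'a set \<Rightarrow> 'a rel \<Rightarrow> 'a set \<Rightarrow> bool" where
  "antichain Q r A \<longleftrightarrow> A \<subseteq> Q \<and> (\<forall>x\<in>A. \<forall>y\<in>A. (x, y) \<in> r \<longrightarrow> x = y)"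

definition maximal_antichain :: "'a set \<Rightarrow> 'a rel \<Rightarrow> 'a set \<Rightarrow> bool" where
  "maximal_antichain Q r A \<longleftrightarrow> antichain Q r A \<and>
     (\<forall>B. antichain Q r B \<and> A \<subseteq> B \<longrightarrow> B = A)"

definition is_cube :: "'a set \<Rightarrow> 'a rel \<Rightarrow> 'a set \<Rightarrow> 'a set \<Rightarrow> bool" where
  "is_cube Q r I M \<longleftrightarrow> order_ideal Q r I \<and> M \<subseteq> maximal_elems r I"

definition cube_verts :: "'a set \<Rightarrow> 'a set \<Rightarrow> 'a set set" where
  "cube_verts I M = {I - S | S. S \<subseteq> M}"

definition adjacent :: "'a set \<Rightarrow> 'a rel \<Rightarrow> 'a set \<Rightarrow> 'a set \<Rightarrow> bool" where
  "adjacent Q r J K \<longleftrightarrow>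
     (\<exists>m. is_cube Q r J {m} \<and> K = J - {m}) \<or> (\<exists>m. is_cube Q r K {m} \<and> J = K - {m})"

text \<open>An edge path from u to v, as the list of its vertices; its length is length p - 1.\<close>
definition edge_path :: "'a set \<Rightarrow> 'a rel \<Rightarrow> 'a set list \<Rightarrow> 'a set \<Rightarrow> 'a set \<Rightarrow> bool" where
  "edge_path Q r p u v \<longleftrightarrow> p \<noteq> [] \<and> hd p = u \<and> last p = v \<and>
     (\<forall>w\<in>set p. order_ideal Q r w) \<and>
     (\<forall>i. Suc i < length p \<longrightarrow> adjacent Q r (p ! i) (p ! Suc i))"

definition geodesic :: "'a set \<Rightarrow> 'a rel \<Rightarrow> 'a set list \<Rightarrow> 'a set \<Rightarrow> 'a set \<Rightarrow> bool" where
  "geodesic Q r p u v \<longleftrightarrow> edge_path Q r p u v \<and>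
     (\<forall>q. edge_path Q r q u v \<longrightarrow> length p \<le> length q)"

definition in_interval :: "'a set \<Rightarrow> 'a rel \<Rightarrow> 'a set \<times> 'a set \<Rightarrow> 'a set \<times> 'a set
     \<Rightarrow> 'a set \<times> 'a set \<Rightarrow> bool" where
  "in_interval Q r C D E \<longleftrightarrow> is_cube Q r (fst E) (snd E) \<and>
     (\<forall>w\<in>cube_verts (fst E) (snd E).
        \<exists>c\<in>cube_verts (fst C) (snd C). \<exists>d\<in>cube_verts (fst D) (snd D).
          \<exists>p. geodesic Q r p c d \<and> w \<in> set p)"

definition maximal_in_interval :: "'a set \<Rightarrow> 'a rel \<Rightarrow> 'a set \<times> 'a set \<Rightarrow> 'a set \<times> 'a set
     \<Rightarrow> 'a set \<times> 'a set \<Rightarrow> bool" where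
  "maximal_in_interval Q r C D E \<longleftrightarrow> in_interval Q r C D E \<and>
     (\<forall>E'. in_interval Q r C D E' \<longrightarrow>
        \<not> (cube_verts (fst E) (snd E) \<subset> cube_verts (fst E') (snd E')))"

text \<open>Valid cube sequence C(I_1,M_1),...,C(I_k,M_k), as a list (0-indexed).\<close>
definition valid_cube_seq :: "'a set \<Rightarrow> 'a rel \<Rightarrow> ('a set \<times> 'a set) list \<Rightarrow> bool" where
  "valid_cube_seq Q r cs \<longleftrightarrow> cs \<noteq> [] \<and>
     (\<forall>c\<in>set cs. is_cube Q r (fst c) (snd c)) \<and>
     (\<forall>j. Suc j < length cs \<longrightarrow> fst (cs ! j) \<subset> fst (cs ! Suc j)) \<and>
     fst (last cs) = Q \<and>
     fst (cs ! 0) = snd (cs ! 0) \<and>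
     (\<forall>j. Suc j < length cs \<longrightarrow> fst (cs ! Suc j) - fst (cs ! j) \<subseteq> snd (cs ! Suc j)) \<and>
     (\<forall>c\<in>set cs. maximal_antichain Q r (snd c))"

end

theory Submission
  imports Defs
begin

text \<open>The vertices of X_Q are the order ideals, and the edge-path distance between two of them
  is the size of their symmetric difference; so the vertices on geodesics from c to d are
  exactly the ideals between c \<inter> d and c \<union> d. For consecutive cubes C(I,M), C(J,N) of a
  valid sequence, M is a maximal antichain of maximal elements of I, hence contains every
  maximal element of I, in particular N \<inter> I. Therefore X[C(I,M), C(J,N)] consists exactly of
  the cubes whose vertices lie between I - M and J. A maximal such cube C(A,K) must have
  M \<subseteq> A (else it extends in a direction m \<in> M) and A - I \<subseteq> K (else it extends in a
  direction x \<in> A - I \<subseteq> N), and then I = A - (A - I) is one of its vertices.\<close>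

lemma finite_order_ideal: "finite Q \<Longrightarrow> order_ideal Q r I \<Longrightarrow> finite I"
  unfolding order_ideal_def by (blast intro: finite_subset)

lemma order_ideal_Diff_maximal:
  "order_ideal Q r A \<Longrightarrow> U \<subseteq> maximal_elems r A \<Longrightarrow> order_ideal Q r (A - U)"
  unfolding order_ideal_def maximal_elems_def by blast

lemma maximal_elems_subset: "A \<subseteq> J \<Longrightarrow> maximal_elems r J \<inter> A \<subseteq> maximal_elems r A"
  unfolding maximal_elems_def by blast

lemma finite_has_maximal_wrt:
  assumes "partial_order_on Q r" "finite S" "S \<noteq> {}"
  shows "\<exists>x\<in>S. \<forall>y\<in>S. (x, y) \<in> r \<longrightarrow> y = x"
proof -
  define R where "R x y \<longleftrightarrow> (x, y) \<in> r \<and> x \<noteq> y" for x y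
  have "trans r" "antisym r" using partial_order_onD[OF assms(1)] by auto
  then have "asymp_on S R" "transp_on S R"
    unfolding R_def asymp_on_def transp_on_def antisym_def trans_def by blast+
  from Finite_Set.bex_max_element[OF assms(2) this assms(3)] show ?thesis
    unfolding R_def by blast
qed

lemma maximal_antichain_eq_maximal_elems:
  assumes "maximal_antichain Q r M" "M \<subseteq> maximal_elems r I" "I \<subseteq> Q"
  shows "maximal_elems r I = M"
proof
  show "maximal_elems r I \<subseteq> M"
  proof
    fix n assume n: "n \<in> maximal_elems r I"
    have "antichain Q r (insert n M)"
      using n assms(2,3) unfolding antichain_def maximal_elems_def by blast
    then show "n \<in> M"
      using assms(1) unfolding maximal_antichain_def by blast
  qed
qed (rule assms(2))

lemma card_sym_diff_triangle:
  assumes "finite a" "finite b" "finite c"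
  shows "card (sym_diff a c) \<le> card (sym_diff a b) + card (sym_diff b c)"
proof -
  have "card (sym_diff a c) \<le> card (sym_diff a b \<union> sym_diff b c)"
    using assms by (intro card_mono) auto
  also have "\<dots> \<le> card (sym_diff a b) + card (sym_diff b c)"
    by (rule card_Un_le)
  finally show ?thesis .
qed

lemma adjacent_sym: "adjacent Q r a b \<longleftrightarrow> adjacent Q r b a"
  unfolding adjacent_def by blast

lemma card_sym_diff_adjacent: "adjacent Q r a b \<Longrightarrow> card (sym_diff a b) = 1"
  unfolding adjacent_def is_cube_def maximal_elems_def
  by (auto simp: Un_Diff_Int[symmetric] card_Suc_eq intro!: exI[of _ "{}"])

lemma card_sym_diff_walk:
  assumes "successively (adjacent Q r) p" "\<forall>x\<in>set p. finite x" "w \<in> set p"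
  shows "card (sym_diff (hd p) w) + card (sym_diff w (last p)) < length p"
  using assms
proof (induction "adjacent Q r" p arbitrary: w rule: successively.induct)
  case (3 x y xs)
  let ?z = "last (y # xs)"
  have "adjacent Q r x y" using "3.prems"(1) by simp
  then have step: "card (sym_diff x y) = 1" by (rule card_sym_diff_adjacent)
  have fin: "finite x" "finite y" "finite ?z"
    using "3.prems"(2) by auto
  show ?case
  proof (cases "w = x")
    case True
    have "card (sym_diff y ?z) < length (y # xs)"
      using "3.hyps"[of ?z] "3.prems" by simp
    moreover have "card (sym_diff x ?z) \<le> card (sym_diff x y) + card (sym_diff y ?z)"
      using fin by (rule card_sym_diff_triangle)
    ultimately show ?thesis using True step by simp
  next
    case False
    then have w: "w \<in> set (y # xs)" using "3.prems"(3) by simp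
    then have "finite w" using "3.prems"(2) by auto
    then have "card (sym_diff x w) \<le> card (sym_diff x y) + card (sym_diff y w)"
      using fin by (intro card_sym_diff_triangle)
    moreover have "card (sym_diff y w) + card (sym_diff w ?z) < length (y # xs)"
      using "3.hyps"[OF _ _ w] "3.prems" by simp
    ultimately show ?thesis using step by simp
  qed
qed auto

lemma edge_path_iff:
  "edge_path Q r p u v \<longleftrightarrow> p \<noteq> [] \<and> hd p = u \<and> last p = v \<and>
     (\<forall>w\<in>set p. order_ideal Q r w) \<and> successively (adjacent Q r) p"
  unfolding edge_path_def successively_conv_nth by blast

lemma edge_path_append:
  assumes "edge_path Q r p u v" "edge_path Q r q v w"
  shows "edge_path Q r (p @ tl q) u w"
proof -
  obtain q' where q: "q = v # q'"
    using assms(2) unfolding edge_path_iff by (cases q) auto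
  show ?thesis
    using assms unfolding edge_path_iff q
    by (cases q') (auto simp: successively_append_iff)
qed

lemma edge_path_rev: "edge_path Q r p u v \<Longrightarrow> edge_path Q r (rev p) v u"
  unfolding edge_path_iff by (auto simp: hd_rev last_rev adjacent_sym)

lemma ex_ascending_edge_path:
  assumes fin: "finite Q" and po: "partial_order_on Q r" and u: "order_ideal Q r u"
    and v: "order_ideal Q r v" and "u \<subseteq> v"
  shows "\<exists>p. edge_path Q r p u v \<and> length p = card (v - u) + 1"
  using v \<open>u \<subseteq> v\<close>
proof (induction "card (v - u)" arbitrary: v)
  case 0
  then have "finite v"
    using fin by (blast intro: finite_order_ideal)
  with 0 have "v = u" by auto
  then show ?case
    using u by (intro exI[of _ "[u]"]) (simp add: edge_path_def)
next
  case (Suc n)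
  have fin_vu: "finite (v - u)"
    using Suc.prems(1) fin by (blast intro: finite_order_ideal)
  then obtain x where x: "x \<in> v - u" and x_max: "\<forall>y\<in>v - u. (x, y) \<in> r \<longrightarrow> y = x"
    using finite_has_maximal_wrt[OF po fin_vu] Suc.hyps(2) by fastforce
  have "x \<in> maximal_elems r v"
    using x x_max u unfolding maximal_elems_def order_ideal_def by blast
  then have cube: "is_cube Q r v {x}" and v': "order_ideal Q r (v - {x})"
    using Suc.prems(1) by (auto simp: is_cube_def intro: order_ideal_Diff_maximal)
  have "card (v - {x} - u) = n"
    using Suc.hyps(2) x fin_vu by (simp add: Diff_insert2[symmetric] Diff_insert[symmetric])
  then obtain p where p: "edge_path Q r p u (v - {x})" "length p = n + 1"
    using Suc.hyps(1)[OF _ v'] Suc.prems x by blast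
  have "edge_path Q r [v - {x}, v] (v - {x}) v"
    using cube v' Suc.prems unfolding edge_path_def adjacent_def by auto
  from edge_path_append[OF p(1) this] show ?case
    using p(2) Suc.hyps(2) by (intro exI[of _ "p @ [v]"]) simp
qed

lemma card_sym_diff_less_length:
  assumes "finite Q" "edge_path Q r p c d"
  shows "card (sym_diff c d) < length p"
proof -
  have "\<forall>x\<in>set p. finite x"
    using assms unfolding edge_path_def by (blast intro: finite_order_ideal)
  then show ?thesis
    using card_sym_diff_walk[of Q r p d] assms(2) unfolding edge_path_iff by auto
qed

lemma ex_edge_path_card_sym_diff:
  assumes "finite Q" "partial_order_on Q r" "order_ideal Q r c" "order_ideal Q r d"
  shows "\<exists>p. edge_path Q r p c d \<and> length p = card (sym_diff c d) + 1"
proof -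
  have meet: "order_ideal Q r (c \<inter> d)"
    using assms(3,4) unfolding order_ideal_def by blast
  obtain p where p: "edge_path Q r p (c \<inter> d) c" "length p = card (c - d) + 1"
    using ex_ascending_edge_path[OF assms(1,2) meet assms(3)] by (auto simp: Diff_Int)
  obtain q where q: "edge_path Q r q (c \<inter> d) d" "length q = card (d - c) + 1"
    using ex_ascending_edge_path[OF assms(1,2) meet assms(4)] by (auto simp: Diff_Int)
  have "finite c" "finite d"
    using assms finite_order_ideal by blast+
  then have "card (sym_diff c d) = card (c - d) + card (d - c)"
    by (intro card_Un_disjoint) auto
  then show ?thesis
    using edge_path_append[OF edge_path_rev[OF p(1)] q(1)] p(2) q(2) by auto
qed

lemma geodesic_length:
  assumes "finite Q" "partial_order_on Q r" "geodesic Q r p c d"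
  shows "length p = card (sym_diff c d) + 1"
proof -
  have "order_ideal Q r c" "order_ideal Q r d"
    using assms(3) unfolding geodesic_def edge_path_iff by auto
  then obtain q where "edge_path Q r q c d" "length q = card (sym_diff c d) + 1"
    using ex_edge_path_card_sym_diff assms(1,2) by blast
  then show ?thesis
    using assms card_sym_diff_less_length unfolding geodesic_def by fastforce
qed

lemma geodesicI:
  assumes "finite Q" "edge_path Q r p c d" "length p = card (sym_diff c d) + 1"
  shows "geodesic Q r p c d"
  using assms card_sym_diff_less_length unfolding geodesic_def by fastforce

text \<open>A vertex w on a geodesic from c to d satisfies |c \<triangle> w| + |w \<triangle> d| = |c \<triangle> d|,
  which forces the two symmetric differences to be disjoint.\<close>
lemma geodesic_vertex_between:
  assumes fin: "finite Q" and po: "partial_order_on Q r"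
    and geo: "geodesic Q r p c d" and w: "w \<in> set p"
  shows "c \<inter> d \<subseteq> w \<and> w \<subseteq> c \<union> d"
proof -
  have path: "edge_path Q r p c d"
    using geo unfolding geodesic_def by blast
  have fin_p: "\<forall>x\<in>set p. finite x"
    using path fin unfolding edge_path_def by (blast intro: finite_order_ideal)
  then have fin_cwd: "finite c" "finite w" "finite d"
    using path w unfolding edge_path_iff by auto
  have "card (sym_diff c w) + card (sym_diff w d) < length p"
    using card_sym_diff_walk[OF _ fin_p w] path unfolding edge_path_iff by auto
  also have "\<dots> = card (sym_diff c d) + 1"
    using geodesic_length[OF fin po geo] .
  also have "card (sym_diff c d) \<le> card (sym_diff c w \<union> sym_diff w d)"
    using fin_cwd by (intro card_mono) auto
  finally have "card (sym_diff c w \<inter> sym_diff w d) = 0"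
    using card_Un_Int[of "sym_diff c w" "sym_diff w d"] fin_cwd by simp
  then have "sym_diff c w \<inter> sym_diff w d = {}"
    using fin_cwd by simp
  then show ?thesis by blast
qed

lemma ex_geodesic_through:
  assumes fin: "finite Q" and po: "partial_order_on Q r"
    and ideals: "order_ideal Q r L" "order_ideal Q r w" "order_ideal Q r J"
    and "L \<subseteq> w" "w \<subseteq> J"
  shows "\<exists>p. geodesic Q r p L J \<and> w \<in> set p"
proof -
  obtain p where p: "edge_path Q r p L w" "length p = card (w - L) + 1"
    using ex_ascending_edge_path[OF fin po] ideals assms by blast
  obtain q where q: "edge_path Q r q w J" "length q = card (J - w) + 1"
    using ex_ascending_edge_path[OF fin po] ideals assms by blast
  have "sym_diff L J = (w - L) \<union> (J - w)"
    using assms by blast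
  moreover have "finite w" "finite J"
    using ideals fin finite_order_ideal by blast+
  ultimately have "card (sym_diff L J) = card (w - L) + card (J - w)"
    by (metis card_Un_disjoint Diff_disjoint Int_Diff finite_Diff inf.commute)
  then have "geodesic Q r (p @ tl q) L J"
    using geodesicI[OF fin edge_path_append[OF p(1) q(1)]] p(2) q(2) by simp
  moreover have "w \<in> set (p @ tl q)"
    using p(1) unfolding edge_path_iff by auto
  ultimately show ?thesis by blast
qed

lemma cube_verts_top: "A \<in> cube_verts A K"
  unfolding cube_verts_def by (auto intro: exI[of _ "{}"])

lemma cube_verts_bottom: "A - K \<in> cube_verts A K"
  unfolding cube_verts_def by auto

lemma cube_verts_between_iff:
  "(\<forall>w\<in>cube_verts A K. L \<subseteq> w \<and> w \<subseteq> J) \<longleftrightarrow> L \<subseteq> A - K \<and> A \<subseteq> J"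
proof
  assume "\<forall>w\<in>cube_verts A K. L \<subseteq> w \<and> w \<subseteq> J"
  with cube_verts_top cube_verts_bottom show "L \<subseteq> A - K \<and> A \<subseteq> J" by blast
qed (auto simp: cube_verts_def)

lemma is_cube_insert:
  assumes cube: "is_cube Q r A K" and "m \<in> Q" "m \<notin> A"
    and below: "\<And>y. (y, m) \<in> r \<Longrightarrow> y \<noteq> m \<Longrightarrow> y \<in> A - K"
  shows "is_cube Q r (insert m A) (insert m K)"
proof -
  have A: "order_ideal Q r A" "K \<subseteq> maximal_elems r A"
    using cube unfolding is_cube_def by auto
  have "order_ideal Q r (insert m A)"
    using A(1) \<open>m \<in> Q\<close> below unfolding order_ideal_def by blast
  moreover have "insert m K \<subseteq> maximal_elems r (insert m A)"
    using A \<open>m \<notin> A\<close> below unfolding order_ideal_def maximal_elems_def by blast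
  ultimately show ?thesis
    unfolding is_cube_def by blast
qed

lemma cube_verts_psubset_insert:
  assumes "m \<notin> A"
  shows "cube_verts A K \<subset> cube_verts (insert m A) (insert m K)"
proof
  show "cube_verts A K \<subseteq> cube_verts (insert m A) (insert m K)"
  proof
    fix w assume "w \<in> cube_verts A K"
    then obtain U where "w = A - U" "U \<subseteq> K"
      unfolding cube_verts_def by blast
    then have "w = insert m A - insert m U" "insert m U \<subseteq> insert m K"
      using assms by blast+
    then show "w \<in> cube_verts (insert m A) (insert m K)"
      unfolding cube_verts_def by blast
  qed
  have "insert m A \<notin> cube_verts A K"
    using assms unfolding cube_verts_def by blast
  then show "cube_verts A K \<noteq> cube_verts (insert m A) (insert m K)"
    using cube_verts_top by blast
qed

lemma cube_verts_psubset_insert_direction: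
  assumes "x \<in> A" "x \<notin> K"
  shows "cube_verts A K \<subset> cube_verts A (insert x K)"
proof
  show "cube_verts A K \<subseteq> cube_verts A (insert x K)"
    unfolding cube_verts_def by blast
  have "A - {x} \<in> cube_verts A (insert x K)"
    unfolding cube_verts_def by (auto intro: exI[of _ "{x}"])
  moreover have "A - {x} \<notin> cube_verts A K"
  proof
    assume "A - {x} \<in> cube_verts A K"
    then obtain U where "A - {x} = A - U" "U \<subseteq> K"
      unfolding cube_verts_def by blast
    then show False
      using assms by blast
  qed
  ultimately show "cube_verts A K \<noteq> cube_verts A (insert x K)"
    by blast
qed

text \<open>The hypothesis N \<inter> I \<subseteq> M puts the bottom vertex I - M of C(I,M) below every vertex
  of C(J,N), so all geodesics realising the interval can be taken from I - M to J.\<close>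
lemma in_interval_iff_between:
  assumes fin: "finite Q" and po: "partial_order_on Q r"
    and cubes: "is_cube Q r I M" "is_cube Q r J N" and "I \<subseteq> J" "N \<inter> I \<subseteq> M"
  shows "in_interval Q r (I, M) (J, N) (A, K) \<longleftrightarrow> is_cube Q r A K \<and> I - M \<subseteq> A - K \<and> A \<subseteq> J"
proof
  assume int: "in_interval Q r (I, M) (J, N) (A, K)"
  have "I - M \<subseteq> w \<and> w \<subseteq> J" if w: "w \<in> cube_verts A K" for w
  proof -
    obtain c d p where "c \<in> cube_verts I M" "d \<in> cube_verts J N"
      and "geodesic Q r p c d" "w \<in> set p"
      using int w unfolding in_interval_def by auto
    with geodesic_vertex_between[OF fin po] show ?thesis
      using assms unfolding cube_verts_def by blast
  qed
  then have "I - M \<subseteq> A - K \<and> A \<subseteq> J"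
    using cube_verts_between_iff[of A K "I - M" J] by blast
  then show "is_cube Q r A K \<and> I - M \<subseteq> A - K \<and> A \<subseteq> J"
    using int unfolding in_interval_def by auto
next
  assume between: "is_cube Q r A K \<and> I - M \<subseteq> A - K \<and> A \<subseteq> J"
  have ideals: "order_ideal Q r (I - M)" "order_ideal Q r J"
    using cubes unfolding is_cube_def by (auto intro: order_ideal_Diff_maximal)
  have "\<exists>p. geodesic Q r p (I - M) J \<and> w \<in> set p" if w: "w \<in> cube_verts A K" for w
  proof -
    obtain U where U: "w = A - U" "U \<subseteq> K"
      using w unfolding cube_verts_def by auto
    then have "order_ideal Q r w"
      using between unfolding is_cube_def by (auto intro: order_ideal_Diff_maximal)
    moreover have "I - M \<subseteq> w" "w \<subseteq> J"
      using U between by blast+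
    ultimately show ?thesis
      by (rule ex_geodesic_through[OF fin po ideals(1) _ ideals(2)])
  qed
  then show "in_interval Q r (I, M) (J, N) (A, K)"
    using between cube_verts_bottom[of I M] cube_verts_top[of J N]
    unfolding in_interval_def by fastforce
qed

lemma maximal_cube_between_contains:
  assumes cubes: "is_cube Q r I M" "is_cube Q r J N" and "I \<subseteq> J" "J - I \<subseteq> N"
    and cube: "is_cube Q r A K" and between: "I - M \<subseteq> A - K" "A \<subseteq> J"
    and maximal: "\<And>A' K'. is_cube Q r A' K' \<Longrightarrow> I - M \<subseteq> A' - K' \<Longrightarrow> A' \<subseteq> J
      \<Longrightarrow> \<not> cube_verts A K \<subset> cube_verts A' K'"
  shows "I \<in> cube_verts A K"
proof -
  have I: "order_ideal Q r I" "M \<subseteq> maximal_elems r I"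
    using cubes(1) unfolding is_cube_def by auto
  have "M \<subseteq> A"
  proof
    fix m assume m: "m \<in> M"
    then have m_max: "m \<in> maximal_elems r I"
      using I(2) by blast
    show "m \<in> A"
    proof (rule ccontr)
      assume "m \<notin> A"
      have below: "y \<in> A - K" if "(y, m) \<in> r" "y \<noteq> m" for y
      proof -
        have "y \<in> I" "m \<in> I"
          using that m_max I(1) unfolding order_ideal_def maximal_elems_def by blast+
        then have "y \<notin> M"
          using that I(2) unfolding maximal_elems_def by blast
        then show ?thesis
          using \<open>y \<in> I\<close> between(1) by blast
      qed
      have "m \<in> Q"
        using m_max I(1) unfolding order_ideal_def maximal_elems_def by blast
      have "is_cube Q r (insert m A) (insert m K)"
        by (rule is_cube_insert[OF cube \<open>m \<in> Q\<close> \<open>m \<notin> A\<close> below])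
      moreover have "I - M \<subseteq> insert m A - insert m K"
        using between(1) m by blast
      moreover have "insert m A \<subseteq> J"
        using m_max between(2) \<open>I \<subseteq> J\<close> unfolding maximal_elems_def by blast
      ultimately have "\<not> cube_verts A K \<subset> cube_verts (insert m A) (insert m K)"
        by (rule maximal)
      then show False
        using cube_verts_psubset_insert[OF \<open>m \<notin> A\<close>] by contradiction
    qed
  qed
  have "A - I \<subseteq> K"
  proof
    fix x assume x: "x \<in> A - I"
    show "x \<in> K"
    proof (rule ccontr)
      assume "x \<notin> K"
      have "x \<in> maximal_elems r J"
        using x between(2) \<open>J - I \<subseteq> N\<close> cubes(2) unfolding is_cube_def by blast
      then have "x \<in> maximal_elems r A"
        using maximal_elems_subset[OF between(2)] x by blast
      then have "is_cube Q r A (insert x K)"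
        using cube unfolding is_cube_def by blast
      moreover have "I - M \<subseteq> A - insert x K"
        using x between(1) by blast
      ultimately have "\<not> cube_verts A K \<subset> cube_verts A (insert x K)"
        using between(2) by (rule maximal)
      then show False
        using cube_verts_psubset_insert_direction[OF _ \<open>x \<notin> K\<close>] x by blast
    qed
  qed
  then have "A - (A - I) \<in> cube_verts A K"
    unfolding cube_verts_def by blast
  moreover have "A - (A - I) = I"
    using \<open>M \<subseteq> A\<close> between(1) by blast
  ultimately show ?thesis
    by simp
qed

lemma valid_cube_seq_consecutive:
  assumes "valid_cube_seq Q r cs" "Suc i < length cs" "cs ! i = (I, M)" "cs ! Suc i = (J, N)"
  shows "is_cube Q r I M" "is_cube Q r J N" "I \<subset> J" "J - I \<subseteq> N" "maximal_antichain Q r M"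
  using assms nth_mem[of i cs] nth_mem[of "Suc i" cs] unfolding valid_cube_seq_def
  by (metis Suc_lessD fst_conv snd_conv)+

theorem lemma5p3:
  fixes Q :: "'a set" and r :: "'a rel" and cs :: "('a set \<times> 'a set) list" and i :: nat
  assumes "finite Q" and "partial_order_on Q r"
    and "valid_cube_seq Q r cs"
    and "Suc i < length cs"
    and "maximal_in_interval Q r (cs ! i) (cs ! Suc i) E"
  shows "fst (cs ! i) \<in> cube_verts (fst E) (snd E)"
proof -
  obtain I M J N A K where IM: "cs ! i = (I, M)" and JN: "cs ! Suc i = (J, N)" and E: "E = (A, K)"
    by (metis surj_pair)
  note seq = valid_cube_seq_consecutive[OF assms(3,4) IM JN]
  have "N \<inter> I \<subseteq> maximal_elems r I"
    using seq(2,3) maximal_elems_subset[of I J r] unfolding is_cube_def by blast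
  also have "\<dots> = M"
    using seq(1,5) maximal_antichain_eq_maximal_elems unfolding is_cube_def order_ideal_def by blast
  finally have interval: "in_interval Q r (I, M) (J, N) (A', K') \<longleftrightarrow>
      is_cube Q r A' K' \<and> I - M \<subseteq> A' - K' \<and> A' \<subseteq> J" for A' K'
    using in_interval_iff_between[OF assms(1,2) seq(1,2)] seq(3) by blast
  have "is_cube Q r A K" "I - M \<subseteq> A - K" "A \<subseteq> J"
    using assms(5) IM JN E interval unfolding maximal_in_interval_def by auto
  moreover have "\<not> cube_verts A K \<subset> cube_verts A' K'"
    if "is_cube Q r A' K'" "I - M \<subseteq> A' - K'" "A' \<subseteq> J" for A' K'
    using assms(5) IM JN E interval that unfolding maximal_in_interval_def by fastforce
  ultimately show ?thesis
    using maximal_cube_between_contains[OF seq(1,2) _ seq(4)] seq(3) IM E by auto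
qed

end
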